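(* A balanced wiring $F$ is nilpotent if and only if its computation graph $\mathbf G(F)$ is acyclic.
   Context: Terms: first-order terms built from an infinite set of variables, a binary function symbol $\bullet$ written infix, infinitely many constant symbols including a distinguished constant $\star$, and for each $n\ge1$ at least one $n$-ary function symbol. $\mathrm{var}(t)$ is the set of variables of $t$; $t$ is closed if $\mathrm{var}(t)=\emptyset$. The height $h(t)$ is the maximal distance from the root to a node in the tree of $t$; the height of an occurrence of a variable in $t$ is its distance from the root. A flow is a pair of terms written $t\leftarrow u$ with $\mathrm{var}(t)\subseteq\mathrm{var}(u)$, considered up to renaming. A fact is a flow $t\leftarrow\star$ (so $t$ is closed). The product of flows $u\leftarrow v$ and $t\leftarrow w$ (representatives chosen with disjoint variable sets) is defined iff $v$ and $t$ are unifiable, and then equals $u\theta\leftarrow w\theta$ with $\theta$ a most general unifier of $v,t$. A wiring is a finite set of flows, written as a formal sum, with $0$ the empty wiring; product $FG=\{fg: f\in F,g\in G, fg\text{ defined}\}$, $F^n$ the $n$-fold product. For a fact $\mathbf u$, $F\mathbf u$ denotes $F\{\mathbf u\}$ (a set of facts). $F$ is nilpotent if $F^n=0$ for some $n\in\mathbb N$. A flow $t\leftarrow u$ is balanced if for every variable $x$, all occurrences of $x$ in $t$ and in $u$ have the same height; a wiring is balanced if all its flows are. The height of a flow $t\leftarrow u$ is $\max\{h(t),h(u)\}$; the height $h(F)$ of a wiring is the maximal height of its flows. For a balanced wiring $F$, its computation space $\mathrm{Comp}(F)$ is the set of facts $t\leftarrow\star$ with $h(t)\le h(F)$ and $t$ built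 using only symbols occurring in $F$ and the constant $\star$. The computation graph $\mathbf G(F)$ is the directed graph with vertex set $\mathrm{Comp}(F)$ and an edge from $\mathbf u$ to $\mathbf v$ iff $\mathbf v\in F\mathbf u$. *)

theory Defs
  imports Main
begin

datatype sym = Bullet | Star | Const nat | Fn nat nat

fun arity :: "sym \<Rightarrow> nat" where
  "arity Bullet = 2"
| "arity Star = 0"
| "arity (Const i) = 0"
| "arity (Fn n i) = n"

datatype trm = Var nat | Fun sym "trm list"

fun wf_trm :: "trm \<Rightarrow> bool" where
  "wf_trm (Var x) = True"
| "wf_trm (Fun f ts) = (length ts = arity f \<and> (\<forall>t\<in>set ts. wf_trm t))"

fun vars :: "trm \<Rightarrow> nat set" where
  "vars (Var x) = {x}"
| "vars (Fun f ts) = (\<Union>t\<in>set ts. vars t)"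

fun syms :: "trm \<Rightarrow> sym set" where
  "syms (Var x) = {}"
| "syms (Fun f ts) = insert f (\<Union>t\<in>set ts. syms t)"

fun height :: "trm \<Rightarrow> nat" where
  "height (Var x) = 0"
| "height (Fun f ts) = (if ts = [] then 0 else Suc (Max (height ` set ts)))"

fun occ_heights :: "trm \<Rightarrow> nat \<Rightarrow> nat set" where
  "occ_heights (Var y) x = (if x = y then {0} else {})"
| "occ_heights (Fun f ts) x = Suc ` (\<Union>t\<in>set ts. occ_heights t x)"

fun subst :: "(nat \<Rightarrow> trm) \<Rightarrow> trm \<Rightarrow> trm" where
  "subst \<sigma> (Var x) = \<sigma> x"
| "subst \<sigma> (Fun f ts) = Fun f (map (subst \<sigma>) ts)"

definition rename :: "(nat \<Rightarrow> nat) \<Rightarrow> trm \<Rightarrow> trm" where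
  "rename p t = subst (Var \<circ> p) t"

definition is_unifier :: "(nat \<Rightarrow> trm) \<Rightarrow> trm \<Rightarrow> trm \<Rightarrow> bool" where
  "is_unifier \<sigma> s t \<longleftrightarrow> subst \<sigma> s = subst \<sigma> t"

definition is_mgu :: "(nat \<Rightarrow> trm) \<Rightarrow> trm \<Rightarrow> trm \<Rightarrow> bool" where
  "is_mgu \<theta> s t \<longleftrightarrow> is_unifier \<theta> s t \<and>
     (\<forall>\<sigma>. is_unifier \<sigma> s t \<longrightarrow> (\<exists>\<tau>. \<forall>x. \<sigma> x = subst \<tau> (\<theta> x)))"

text \<open>A flow t \<leftarrow> u is represented by the pair (t, u).  Flows are considered up to
renaming; we work with representatives, and products return the set of all
representatives of the result.\<close>

type_synonym flow = "trm \<times> trm"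

definition is_flow :: "flow \<Rightarrow> bool" where
  "is_flow f \<longleftrightarrow> vars (fst f) \<subseteq> vars (snd f) \<and> wf_trm (fst f) \<and> wf_trm (snd f)"

definition star :: trm where
  "star = Fun Star []"

definition fprod :: "flow \<Rightarrow> flow \<Rightarrow> flow set" where
  "fprod f g = {(subst \<theta> (rename p (fst f)), subst \<theta> (rename q (snd g))) | p q \<theta>.
      inj p \<and> inj q \<and>
      (vars (rename p (fst f)) \<union> vars (rename p (snd f))) \<inter>
        (vars (rename q (fst g)) \<union> vars (rename q (snd g))) = {} \<and>
      is_mgu \<theta> (rename p (snd f)) (rename q (fst g))}"

definition wiring :: "flow set \<Rightarrow> bool" where
  "wiring F \<longleftrightarrow> finite F \<and> (\<forall>f\<in>F. is_flow f)"

definition wprod :: "flow set \<Rightarrow> flow set \<Rightarrow> flow set" where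
  "wprod F G = (\<Union>f\<in>F. \<Union>g\<in>G. fprod f g)"

fun wpow :: "flow set \<Rightarrow> nat \<Rightarrow> flow set" where
  "wpow F 0 = {(Var 0, Var 0)}"
| "wpow F (Suc n) = wprod (wpow F n) F"

definition nilpotent :: "flow set \<Rightarrow> bool" where
  "nilpotent F \<longleftrightarrow> (\<exists>n. wpow F n = {})"

definition balanced_flow :: "flow \<Rightarrow> bool" where
  "balanced_flow f \<longleftrightarrow> (\<forall>x. \<forall>a\<in>occ_heights (fst f) x \<union> occ_heights (snd f) x.
      \<forall>b\<in>occ_heights (fst f) x \<union> occ_heights (snd f) x. a = b)"

definition balanced :: "flow set \<Rightarrow> bool" where
  "balanced F \<longleftrightarrow> (\<forall>f\<in>F. balanced_flow f)"

definition flow_height :: "flow \<Rightarrow> nat" where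
  "flow_height f = max (height (fst f)) (height (snd f))"

definition wiring_height :: "flow set \<Rightarrow> nat" where
  "wiring_height F = Max (insert 0 (flow_height ` F))"

definition wiring_syms :: "flow set \<Rightarrow> sym set" where
  "wiring_syms F = (\<Union>f\<in>F. syms (fst f) \<union> syms (snd f))"

definition Comp :: "flow set \<Rightarrow> flow set" where
  "Comp F = {(t, star) | t. vars t = {} \<and> wf_trm t \<and> height t \<le> wiring_height F \<and>
                            syms t \<subseteq> insert Star (wiring_syms F)}"

definition comp_graph :: "flow set \<Rightarrow> (flow \<times> flow) set" where
  "comp_graph F = {(u, v). u \<in> Comp F \<and> v \<in> Comp F \<and> v \<in> wprod F {u}}"

end

theory Submission
  imports Defs "HOL-Library.Product_Lexorder"
begin

(* (=>) Walking backwards along a path of length n in G(F) that starts at a fact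
   t0 <- star, the flows used along the path compose into a flow of F^n whose
   input has t0 as an instance.  Composition needs most general unifiers, so we
   first prove that every unifiable system of equations has an mgu.  A cycle in
   G(F) gives paths of every length, hence F^n is never empty.

   (<=) A flow of F^N unfolds into a chain of closed instances t_0, ..., t_N of
   the flows of F.  Truncating every term at height h(F) (replacing deeper
   subterms and foreign symbols by star) maps the chain into Comp(F); because
   the flows of F are balanced, truncation commutes with instantiation, so the
   truncated chain is a path in G(F).  For N = |Comp(F)| the pigeonhole
   principle yields a repeated vertex, i.e. a cycle. *)

lemma subst_subst: "subst \<sigma> (subst \<tau> t) = subst (\<lambda>x. subst \<sigma> (\<tau> x)) t"
  by (induction t) auto

lemma subst_Var: "subst Var t = t"
  by (induction t) (auto simp: map_idI)

lemma subst_cong: "(\<And>x. x \<in> vars t \<Longrightarrow> \<sigma> x = \<tau> x) \<Longrightarrow> subst \<sigma> t = subst \<tau> t"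
  by (induction t) auto

lemma subst_closed: "vars t = {} \<Longrightarrow> subst \<sigma> t = t"
  using subst_cong[of t \<sigma> Var] subst_Var by auto

lemma vars_subst: "vars (subst \<sigma> t) = (\<Union>x\<in>vars t. vars (\<sigma> x))"
  by (induction t) auto

lemma subst_rename: "subst \<theta> (rename p t) = subst (\<lambda>x. \<theta> (p x)) t"
  unfolding rename_def by (simp add: subst_subst)

lemma vars_rename: "vars (rename p t) = p ` vars t"
  unfolding rename_def by (auto simp: vars_subst)

lemma finite_vars: "finite (vars t)"
  by (induction t) auto

lemma subst_eq_imp_agree: "subst \<sigma> t = subst \<tau> t \<Longrightarrow> x \<in> vars t \<Longrightarrow> \<sigma> x = \<tau> x"
  by (induction t) auto

section \<open>Most general unifiers\<close>

text \<open>The number of nodes of a term; it makes the occurs check precise.\<close>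
fun tsize :: "trm \<Rightarrow> nat" where
  "tsize (Var x) = 1"
| "tsize (Fun f ts) = Suc (sum_list (map tsize ts))"

lemma tsize_pos: "tsize t > 0"
  by (cases t) auto

lemma tsize_subst_le: "x \<in> vars t \<Longrightarrow> tsize (\<sigma> x) \<le> tsize (subst \<sigma> t)"
proof (induction t)
  case (Fun f ts)
  then obtain t where t: "t \<in> set ts" "x \<in> vars t" by auto
  have "tsize (subst \<sigma> t) \<le> sum_list (map tsize (map (subst \<sigma>) ts))"
    using t(1) by (intro member_le_sum_list) auto
  with Fun.IH[OF t] show ?case by simp
qed simp

lemma occurs_check:
  assumes "\<sigma> x = subst \<sigma> t" and "x \<in> vars t"
  shows "t = Var x"
proof (rule ccontr)
  assume "t \<noteq> Var x"
  with assms(2) obtain f ts t' where t: "t = Fun f ts" "t' \<in> set ts" "x \<in> vars t'"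
    by (cases t) auto
  have "tsize (subst \<sigma> t') \<le> sum_list (map tsize (map (subst \<sigma>) ts))"
    using t(2) by (intro member_le_sum_list) auto
  with tsize_subst_le[OF t(3), of \<sigma>] t(1) have "tsize (\<sigma> x) < tsize (subst \<sigma> t)"
    by simp
  with assms(1) show False by simp
qed

type_synonym eqs = "(trm \<times> trm) list"

definition unifies :: "(nat \<Rightarrow> trm) \<Rightarrow> eqs \<Rightarrow> bool" where
  "unifies \<sigma> E \<longleftrightarrow> (\<forall>(s,t)\<in>set E. subst \<sigma> s = subst \<sigma> t)"

definition mguE :: "(nat \<Rightarrow> trm) \<Rightarrow> eqs \<Rightarrow> bool" where
  "mguE \<theta> E \<longleftrightarrow> unifies \<theta> E \<and> (\<forall>\<rho>. unifies \<rho> E \<longrightarrow> (\<exists>\<tau>. \<forall>x. \<rho> x = subst \<tau> (\<theta> x)))"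

definition varsE :: "eqs \<Rightarrow> nat set" where
  "varsE E = (\<Union>(s,t)\<in>set E. vars s \<union> vars t)"

definition sizeE :: "eqs \<Rightarrow> nat" where
  "sizeE E = sum_list (map (\<lambda>(s,t). tsize s + tsize t) E)"

definition substE :: "(nat \<Rightarrow> trm) \<Rightarrow> eqs \<Rightarrow> eqs" where
  "substE \<sigma> E = map (\<lambda>(s,t). (subst \<sigma> s, subst \<sigma> t)) E"

lemma unifies_Nil [simp]: "unifies \<sigma> []"
  by (simp add: unifies_def)

lemma unifies_Cons [simp]: "unifies \<sigma> ((s,t) # E) \<longleftrightarrow> subst \<sigma> s = subst \<sigma> t \<and> unifies \<sigma> E"
  by (simp add: unifies_def)

lemma unifies_append [simp]: "unifies \<sigma> (A @ B) \<longleftrightarrow> unifies \<sigma> A \<and> unifies \<sigma> B"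
  by (auto simp: unifies_def)

lemma unifies_zip:
  "length ss = length ts \<Longrightarrow> unifies \<sigma> (zip ss ts) \<longleftrightarrow> map (subst \<sigma>) ss = map (subst \<sigma>) ts"
  by (induction ss ts rule: list_induct2) auto

lemma varsE_Cons [simp]: "varsE ((s,t) # E) = vars s \<union> vars t \<union> varsE E"
  by (simp add: varsE_def)

lemma varsE_zip_append:
  "length ss = length ts \<Longrightarrow>
   varsE (zip ss ts @ E) = (\<Union>t\<in>set ss. vars t) \<union> (\<Union>t\<in>set ts. vars t) \<union> varsE E"
  by (induction ss ts rule: list_induct2) auto

lemma finite_varsE: "finite (varsE E)"
  by (auto simp: varsE_def finite_vars)

lemma sizeE_Cons [simp]: "sizeE ((s,t) # E) = tsize s + tsize t + sizeE E"
  by (simp add: sizeE_def)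

lemma sizeE_zip_append:
  "length ss = length ts \<Longrightarrow>
   sizeE (zip ss ts @ E) = sum_list (map tsize ss) + sum_list (map tsize ts) + sizeE E"
  by (induction ss ts rule: list_induct2) auto

lemma unifies_substE: "unifies \<rho> (substE \<sigma> E) \<longleftrightarrow> unifies (\<lambda>x. subst \<rho> (\<sigma> x)) E"
  by (auto simp: unifies_def substE_def subst_subst)

lemma unifies_substE_elim:
  assumes "\<rho> x = subst \<rho> u"
  shows "unifies \<rho> (substE (Var(x := u)) E) \<longleftrightarrow> unifies \<rho> E"
proof -
  have "(\<lambda>y. subst \<rho> ((Var(x := u)) y)) = \<rho>"
    using assms by auto
  then show ?thesis by (simp add: unifies_substE)
qed

lemma varsE_substE_elim: "varsE (substE (Var(x := u)) E) \<subseteq> (varsE E - {x}) \<union> vars u"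
  by (fastforce simp: varsE_def substE_def vars_subst split: if_splits)

lemma mguE_elim:
  assumes nx: "x \<notin> vars u"
    and eqv: "\<And>\<rho>. unifies \<rho> E \<longleftrightarrow> \<rho> x = subst \<rho> u \<and> unifies \<rho> E'"
    and mgu: "mguE \<theta> (substE (Var(x := u)) E')"
  shows "mguE (\<lambda>y. subst \<theta> ((Var(x := u)) y)) E"
proof -
  define \<theta>' where "\<theta>' = (\<lambda>y. subst \<theta> ((Var(x := u)) y))"
  have "subst \<theta>' u = subst \<theta> u"
    using nx by (intro subst_cong) (auto simp: \<theta>'_def)
  then have solved: "\<theta>' x = subst \<theta>' u"
    by (simp add: \<theta>'_def)
  have "unifies \<theta>' E'"
    using mgu by (simp add: mguE_def unifies_substE \<theta>'_def)
  with solved eqv have "unifies \<theta>' E" by blast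
  moreover have "\<exists>\<tau>. \<forall>y. \<rho> y = subst \<tau> (\<theta>' y)" if "unifies \<rho> E" for \<rho>
  proof -
    from that eqv have \<rho>x: "\<rho> x = subst \<rho> u" and "unifies \<rho> E'" by auto
    then have "unifies \<rho> (substE (Var(x := u)) E')"
      by (simp add: unifies_substE_elim)
    with mgu obtain \<tau> where \<tau>: "\<And>y. \<rho> y = subst \<tau> (\<theta> y)"
      by (auto simp: mguE_def)
    have "subst \<tau> (subst \<theta> u) = subst \<rho> u"
      by (simp add: subst_subst \<tau>[symmetric])
    then have "\<rho> y = subst \<tau> (\<theta>' y)" for y
      using \<rho>x \<tau> by (simp add: \<theta>'_def)
    then show ?thesis by blast
  qed
  ultimately show ?thesis
    unfolding mguE_def \<theta>'_def by blast
qed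

definition reduces_to :: "eqs \<Rightarrow> eqs \<Rightarrow> bool" where
  "reduces_to E E' \<longleftrightarrow> (card (varsE E'), sizeE E') < (card (varsE E), sizeE E) \<and>
     ((\<exists>\<theta>. mguE \<theta> E') \<longrightarrow> (\<exists>\<theta>. mguE \<theta> E))"

lemma reduces_delete: "reduces_to ((t, t) # E) E"
proof -
  have "card (varsE E) \<le> card (varsE ((t, t) # E))"
    by (intro card_mono finite_varsE) auto
  moreover have "sizeE E < sizeE ((t, t) # E)"
    using tsize_pos[of t] by simp
  ultimately show ?thesis
    by (auto simp: reduces_to_def less_prod_def mguE_def)
qed

lemma reduces_decompose:
  assumes "length ss = length ts"
  shows "reduces_to ((Fun f ss, Fun f ts) # E) (zip ss ts @ E)"
proof -
  have "unifies \<rho> ((Fun f ss, Fun f ts) # E) \<longleftrightarrow> unifies \<rho> (zip ss ts @ E)" for \<rho>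
    using assms by (simp add: unifies_zip)
  moreover have "varsE (zip ss ts @ E) = varsE ((Fun f ss, Fun f ts) # E)"
    "sizeE (zip ss ts @ E) < sizeE ((Fun f ss, Fun f ts) # E)"
    using assms by (auto simp: varsE_zip_append sizeE_zip_append)
  ultimately show ?thesis
    by (simp add: reduces_to_def less_prod_def mguE_def)
qed

lemma reduces_eliminate:
  assumes nx: "x \<notin> vars u" and xu: "(s, t) = (Var x, u) \<or> (s, t) = (u, Var x)"
  shows "reduces_to ((s, t) # E) (substE (Var(x := u)) E)"
proof -
  have eqv: "unifies \<rho> ((s, t) # E) \<longleftrightarrow> \<rho> x = subst \<rho> u \<and> unifies \<rho> E" for \<rho>
    using xu by auto
  have vE: "varsE ((s, t) # E) = insert x (vars u \<union> varsE E)"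
    using xu by auto
  have "varsE (substE (Var(x := u)) E) \<subseteq> varsE ((s, t) # E) - {x}"
    using varsE_substE_elim[of x u E] nx vE by blast
  also have "\<dots> \<subset> varsE ((s, t) # E)"
    using vE by blast
  finally have "card (varsE (substE (Var(x := u)) E)) < card (varsE ((s, t) # E))"
    by (rule psubset_card_mono[OF finite_varsE])
  then show ?thesis
    using mguE_elim[OF nx eqv] by (auto simp: reduces_to_def less_prod_def)
qed

lemma unifiable_reduces:
  assumes "unifies \<sigma> ((s, t) # E)"
  shows "\<exists>E'. reduces_to ((s, t) # E) E' \<and> unifies \<sigma> E'"
proof -
  from assms have st: "subst \<sigma> s = subst \<sigma> t" and E: "unifies \<sigma> E"
    by auto
  consider (trivial) "s = t" | (left) x where "s = Var x" "s \<noteq> t"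
    | (right) x where "t = Var x" "s \<noteq> t" | (decompose) f ss g ts where "s = Fun f ss" "t = Fun g ts"
    by (cases s; cases t) auto
  then show ?thesis
  proof cases
    case trivial
    then show ?thesis
      using reduces_delete E by blast
  next
    case (left x)
    with st occurs_check[of \<sigma> x t] have "x \<notin> vars t"
      by auto
    with left st E show ?thesis
      using reduces_eliminate[of x t s t E] unifies_substE_elim by auto
  next
    case (right x)
    with st occurs_check[of \<sigma> x s] have "x \<notin> vars s"
      by auto
    with right st E show ?thesis
      using reduces_eliminate[of x s s t E] unifies_substE_elim by auto
  next
    case decompose
    with st have "f = g" and args: "map (subst \<sigma>) ss = map (subst \<sigma>) ts"
      by auto
    moreover from args have "length ss = length ts"
      by (metis length_map)
    ultimately have "reduces_to ((s, t) # E) (zip ss ts @ E)" "unifies \<sigma> (zip ss ts @ E)"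
      using decompose reduces_decompose E args by (auto simp: unifies_zip)
    then show ?thesis
      by blast
  qed
qed

text \<open>Unification theorem: every unifiable system has a most general unifier.
  This is the termination argument of the Martelli--Montanari algorithm.\<close>
lemma unifiable_imp_mguE: "unifies \<sigma> E \<Longrightarrow> \<exists>\<theta>. mguE \<theta> E"
proof (induction "(card (varsE E), sizeE E)" arbitrary: E \<sigma> rule: less_induct)
  case (less E \<sigma>)
  show ?case
  proof (cases E)
    case Nil
    then have "mguE Var E"
      by (auto simp: mguE_def subst_Var)
    then show ?thesis
      by blast
  next
    case (Cons e E')
    with less.prems obtain E'' where "reduces_to E E''" "unifies \<sigma> E''"
      using unifiable_reduces by (cases e) blast
    with less.hyps show ?thesis
      by (auto simp: reduces_to_def)
  qed
qed

lemma mgu_exists: "is_unifier \<sigma> s t \<Longrightarrow> \<exists>\<theta>. is_mgu \<theta> s t"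
  using unifiable_imp_mguE[of \<sigma> "[(s,t)]"]
  by (auto simp: mguE_def is_mgu_def is_unifier_def)

section \<open>Products of flows as common instances\<close>

lemma fprod_instances:
  assumes "(x, y) \<in> fprod (a, b) (c, d)"
  shows "\<exists>\<sigma> \<rho>. x = subst \<sigma> a \<and> y = subst \<rho> d \<and> subst \<sigma> b = subst \<rho> c"
proof -
  from assms obtain p q \<theta> where xy: "x = subst \<theta> (rename p a)" "y = subst \<theta> (rename q d)"
    and "is_mgu \<theta> (rename p b) (rename q c)"
    unfolding fprod_def by auto
  then have "subst \<theta> (rename p b) = subst \<theta> (rename q c)"
    by (simp add: is_mgu_def is_unifier_def)
  with xy show ?thesis
    by (intro exI[of _ "\<lambda>v. \<theta> (p v)"] exI[of _ "\<lambda>v. \<theta> (q v)"]) (simp add: subst_rename)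
qed

lemma fprod_common_instance:
  assumes "subst \<sigma> b = subst \<rho> c"
  shows "\<exists>x y \<tau>. (x, y) \<in> fprod (a, b) (c, d) \<and> subst \<tau> y = subst \<rho> d"
proof -
  define p :: "nat \<Rightarrow> nat" where "p = (\<lambda>v. 2 * v)"
  define q :: "nat \<Rightarrow> nat" where "q = (\<lambda>v. 2 * v + 1)"
  define \<mu> where "\<mu> = (\<lambda>v. if even v then \<sigma> (v div 2) else \<rho> (v div 2))"
  have \<mu>p: "subst \<mu> (rename p t) = subst \<sigma> t" for t
    by (simp add: subst_rename \<mu>_def p_def)
  have \<mu>q: "subst \<mu> (rename q t) = subst \<rho> t" for t
    by (simp add: subst_rename \<mu>_def q_def)
  have unif: "is_unifier \<mu> (rename p b) (rename q c)"
    unfolding is_unifier_def \<mu>p \<mu>q by (fact assms)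
  then obtain \<theta> where mgu: "is_mgu \<theta> (rename p b) (rename q c)"
    using mgu_exists by blast
  have "inj p" "inj q"
    by (auto simp: inj_def p_def q_def)
  moreover have "(vars (rename p a) \<union> vars (rename p b)) \<inter> (vars (rename q c) \<union> vars (rename q d)) = {}"
    by (auto simp: vars_rename p_def q_def) presburger+
  ultimately have "(subst \<theta> (rename p a), subst \<theta> (rename q d)) \<in> fprod (a, b) (c, d)"
    unfolding fprod_def using mgu by fastforce
  moreover obtain \<tau> where "\<forall>v. \<mu> v = subst \<tau> (\<theta> v)"
    using mgu unif by (auto simp: is_mgu_def)
  then have "(\<lambda>v. subst \<tau> (\<theta> v)) = \<mu>"
    by auto
  then have "subst \<tau> (subst \<theta> (rename q d)) = subst \<rho> d"
    by (simp add: subst_subst \<mu>q[symmetric])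
  ultimately show ?thesis by blast
qed

text \<open>Applying a flow c \<leftarrow> d to a closed instance of d yields the matching
  instance of c (the mgu just instantiates d).\<close>
lemma fprod_fact:
  assumes "is_flow (c, d)" and closed: "\<And>x. vars (\<sigma> x) = {}"
  shows "(subst \<sigma> c, star) \<in> fprod (c, d) (subst \<sigma> d, star)"
proof -
  define \<theta> where "\<theta> = (\<lambda>x. if x \<in> vars d then \<sigma> x else Var x)"
  have cl: "vars (subst \<sigma> d) = {}"
    using closed by (simp add: vars_subst)
  have ren: "rename id t = t" for t
    by (simp add: rename_def subst_Var)
  have sd: "subst \<theta> d = subst \<sigma> d"
    by (rule subst_cong) (simp add: \<theta>_def)
  have sc: "subst \<theta> c = subst \<sigma> c"
    using assms(1) by (intro subst_cong) (auto simp: \<theta>_def is_flow_def)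
  have "is_mgu \<theta> d (subst \<sigma> d)"
    unfolding is_mgu_def is_unifier_def
  proof (intro conjI allI impI)
    show "subst \<theta> d = subst \<theta> (subst \<sigma> d)"
      using sd subst_closed[OF cl] by simp
    fix \<rho> assume "subst \<rho> d = subst \<rho> (subst \<sigma> d)"
    then have "subst \<rho> d = subst \<sigma> d"
      using subst_closed[OF cl] by simp
    then have "\<rho> x = subst \<rho> (\<theta> x)" for x
      using subst_eq_imp_agree subst_closed[OF closed] by (simp add: \<theta>_def)
    then show "\<exists>\<tau>. \<forall>x. \<rho> x = subst \<tau> (\<theta> x)" by blast
  qed
  then have "(subst \<theta> (rename id c), subst \<theta> (rename id star)) \<in> fprod (c, d) (subst \<sigma> d, star)"
    unfolding fprod_def using cl by (auto simp: ren star_def intro!: exI[of _ id] exI[of _ \<theta>])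
  then show ?thesis
    by (simp add: ren sc star_def)
qed

section \<open>From paths in the computation graph to flows of F^n\<close>

lemma comp_graph_edge:
  assumes "(u, v) \<in> comp_graph F"
  obtains t s c d \<rho> where "u = (t, star)" "v = (s, star)" "vars t = {}" "vars s = {}"
    "(c, d) \<in> F" "subst \<rho> c = s" "subst \<rho> d = t"
proof -
  from assms obtain t s where uv: "u = (t, star)" "v = (s, star)" "vars t = {}" "vars s = {}"
    by (auto simp: comp_graph_def Comp_def)
  with assms obtain c d where cd: "(c, d) \<in> F" "(s, star) \<in> fprod (c, d) (t, star)"
    by (auto simp: comp_graph_def wprod_def)
  then obtain \<rho> \<rho>' where "s = subst \<rho> c" "subst \<rho> d = subst \<rho>' t"
    using fprod_instances by blast
  with uv cd that show ?thesis
    by (metis subst_closed)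
qed

lemma path_imp_wpow:
  assumes "\<forall>i<n. (u i, u (Suc i)) \<in> comp_graph F" and "u 0 = (t0, star)"
  shows "\<exists>a b \<sigma>. (a, b) \<in> wpow F n \<and> subst \<sigma> b = t0"
  using assms
proof (induction n arbitrary: u t0)
  case 0
  then show ?case
    by (intro exI[of _ "Var 0"] exI[of _ "Var 0"] exI[of _ "\<lambda>_. t0"]) simp
next
  case (Suc n)
  from Suc.prems(1) have "(u 0, u 1) \<in> comp_graph F"
    by auto
  then obtain t0' t1 c d \<rho> where "u 0 = (t0', star)" and u1: "u 1 = (t1, star)"
    and cd: "(c, d) \<in> F" "subst \<rho> c = t1" "subst \<rho> d = t0'"
    by (rule comp_graph_edge)
  with Suc.prems(2) have "subst \<rho> d = t0"
    by simp
  from Suc.prems(1) u1 obtain a b \<sigma> where ab: "(a, b) \<in> wpow F n" "subst \<sigma> b = t1"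
    using Suc.IH[of "\<lambda>i. u (Suc i)" t1] by auto
  then obtain x y \<tau> where "(x, y) \<in> fprod (a, b) (c, d)" "subst \<tau> y = t0"
    using fprod_common_instance[of \<sigma> b \<rho> c a d] cd(2) \<open>subst \<rho> d = t0\<close> by auto
  with ab cd(1) show ?case
    by (auto simp: wprod_def)
qed

lemma not_acyclic_imp_long_walks:
  assumes "\<not> acyclic r"
  shows "\<exists>u. \<forall>i<n. (u i, u (Suc i)) \<in> r"
proof -
  from assms obtain v k where k: "k > 0" "(v, v) \<in> r ^^ k"
    by (auto simp: acyclic_def trancl_power)
  have "(v, v) \<in> r ^^ (k * m)" for m
  proof (induction m)
    case (Suc m)
    have "r ^^ (k * Suc m) = r ^^ (k * m) O r ^^ k"
      by (simp add: relpow_add[symmetric] add.commute)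
    with Suc k(2) show ?case
      by blast
  qed simp
  from this[of n] obtain u where "\<forall>i<k * n. (u i, u (Suc i)) \<in> r"
    by (auto simp: relpow_fun_conv)
  moreover have "n \<le> k * n"
    using k(1) by simp
  ultimately show ?thesis
    by (metis order_less_le_trans)
qed

lemma nilpotent_imp_acyclic:
  assumes "nilpotent F"
  shows "acyclic (comp_graph F)"
proof (rule ccontr)
  assume "\<not> acyclic (comp_graph F)"
  from assms obtain n where n: "wpow F n = {}"
    by (auto simp: nilpotent_def)
  from \<open>\<not> acyclic _\<close> obtain u where path: "\<forall>i<Suc n. (u i, u (Suc i)) \<in> comp_graph F"
    using not_acyclic_imp_long_walks by blast
  then have "(u 0, u 1) \<in> comp_graph F"
    by auto
  then obtain t0 where "u 0 = (t0, star)"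
    by (rule comp_graph_edge)
  with path have "\<exists>a b \<sigma>. (a, b) \<in> wpow F n \<and> subst \<sigma> b = t0"
    using path_imp_wpow[of n u F t0] by simp
  with n show False by simp
qed

section \<open>From flows of F^n to paths in the computation graph\<close>

lemma wpow_imp_chain:
  "(a, b) \<in> wpow F n \<Longrightarrow>
   \<exists>t. t 0 = b \<and> (\<forall>i<n. \<exists>c d \<sigma>. (c, d) \<in> F \<and> t (Suc i) = subst \<sigma> c \<and> t i = subst \<sigma> d)"
proof (induction n arbitrary: a b)
  case (Suc n)
  then obtain a' b' c d where ab': "(a', b') \<in> wpow F n" and cd: "(c, d) \<in> F"
    and "(a, b) \<in> fprod (a', b') (c, d)"
    by (auto simp: wprod_def)
  then obtain \<sigma> \<rho> where b: "b = subst \<rho> d" and interface: "subst \<sigma> b' = subst \<rho> c"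
    using fprod_instances by blast
  from Suc.IH[OF ab'] obtain s where s0: "s 0 = b'"
    and s: "\<forall>i<n. \<exists>c d \<sigma>. (c, d) \<in> F \<and> s (Suc i) = subst \<sigma> c \<and> s i = subst \<sigma> d"
    by blast
  define t where "t = (\<lambda>i. case i of 0 \<Rightarrow> b | Suc j \<Rightarrow> subst \<sigma> (s j))"
  have "\<exists>c d \<sigma>. (c, d) \<in> F \<and> t (Suc i) = subst \<sigma> c \<and> t i = subst \<sigma> d" if "i < Suc n" for i
  proof (cases i)
    case 0
    then show ?thesis
      using cd s0 interface b by (auto simp: t_def)
  next
    case (Suc j)
    with s \<open>i < Suc n\<close> obtain c' d' \<sigma>' where "(c', d') \<in> F" "s (Suc j) = subst \<sigma>' c'"
      "s j = subst \<sigma>' d'"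
      by auto
    with Suc show ?thesis
      by (intro exI[of _ c'] exI[of _ d'] exI[of _ "\<lambda>x. subst \<sigma> (\<sigma>' x)"])
         (simp add: t_def subst_subst)
  qed
  moreover have "t 0 = b"
    by (simp add: t_def)
  ultimately show ?case
    by blast
qed (auto intro!: exI[of _ "\<lambda>_. Var 0"])

fun truncate :: "sym set \<Rightarrow> nat \<Rightarrow> trm \<Rightarrow> trm" where
  "truncate S D (Var x) = star"
| "truncate S D (Fun f ts) =
     (if f \<notin> S \<or> length ts \<noteq> arity f then star
      else if ts = [] then Fun f []
      else (case D of 0 \<Rightarrow> star | Suc D' \<Rightarrow> Fun f (map (truncate S D') ts)))"

lemma height_Fun_le: "height (Fun f ts) \<le> Suc D \<longleftrightarrow> (\<forall>t\<in>set ts. height t \<le> D)"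
  by auto

lemma truncate_bounded:
  "vars (truncate S D t) = {} \<and> wf_trm (truncate S D t) \<and> height (truncate S D t) \<le> D \<and>
   syms (truncate S D t) \<subseteq> insert Star S"
proof (induction t arbitrary: D)
  case (Fun f ts)
  show ?case
  proof (cases "f \<notin> S \<or> length ts \<noteq> arity f \<or> ts = [] \<or> D = 0")
    case False
    then obtain D' where "D = Suc D'"
      using not0_implies_Suc by blast
    with False Fun.IH show ?thesis
      by (auto simp: height_Fun_le)
  qed (auto simp: star_def)
qed (simp add: star_def)

text \<open>Why balancedness matters: let d sit off levels below the root of a term that
  is truncated at height H (so d itself is truncated at height D = H - off), and
  let all occurrences of each variable x lie at the same absolute depth g x.  Then
  truncation commutes with instantiation, each \<sigma> x being truncated to the
  remaining height H - g x.\<close>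
lemma truncate_subst:
  assumes "wf_trm d" "syms d \<subseteq> S" "height d \<le> D" "\<forall>x. \<forall>k\<in>occ_heights d x. k + off = g x"
    "D + off = H"
  shows "truncate S D (subst \<sigma> d) = subst (\<lambda>x. truncate S (H - g x) (\<sigma> x)) d"
  using assms
proof (induction d arbitrary: D off)
  case (Var x)
  then have "0 + off = g x"
    by (metis insertI1 occ_heights.simps(1))
  with Var.prems(5) have "D = H - g x"
    by simp
  then show ?case
    by simp
next
  case (Fun f ts)
  show ?case
  proof (cases "ts = []")
    case False
    then obtain D' where D: "D = Suc D'"
      using Fun.prems(3) by (cases D) auto
    have "truncate S D' (subst \<sigma> t) = subst (\<lambda>x. truncate S (H - g x) (\<sigma> x)) t"
      if t: "t \<in> set ts" for t
    proof (rule Fun.IH[OF t, of D' "Suc off"])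
      show "\<forall>x. \<forall>k\<in>occ_heights t x. k + Suc off = g x"
        using Fun.prems(4) t by fastforce
    qed (use Fun.prems t D height_Fun_le in auto)
    then show ?thesis
      using Fun.prems(1,2) False D by auto
  qed (use Fun.prems in simp)
qed

lemma balanced_flow_depth:
  assumes "balanced_flow (c, d)"
  obtains g where "\<And>x k. k \<in> occ_heights c x \<union> occ_heights d x \<Longrightarrow> k = g x"
proof -
  define g where "g x = (SOME k. k \<in> occ_heights c x \<union> occ_heights d x)" for x
  have "k = g x" if k: "k \<in> occ_heights c x \<union> occ_heights d x" for x k
  proof -
    from k have "g x \<in> occ_heights c x \<union> occ_heights d x"
      unfolding g_def by (rule someI)
    with k assms show ?thesis
      unfolding balanced_flow_def by auto
  qed
  then show thesis
    by (rule that)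
qed

lemma truncated_instance_edge:
  assumes "wiring F" "balanced F" "(c, d) \<in> F"
  defines "trunc \<equiv> \<lambda>t. (truncate (insert Star (wiring_syms F)) (wiring_height F) t, star)"
  shows "(trunc (subst \<sigma> d), trunc (subst \<sigma> c)) \<in> comp_graph F"
proof -
  let ?S = "insert Star (wiring_syms F)" and ?H = "wiring_height F"
  have in_Comp: "trunc t \<in> Comp F" for t
    using truncate_bounded[of ?S ?H t] by (auto simp: Comp_def trunc_def)
  have fl: "is_flow (c, d)"
    using assms(1,3) by (auto simp: wiring_def)
  have "balanced_flow (c, d)"
    using assms(2,3) by (simp add: balanced_def)
  then obtain g where g: "\<And>x k. k \<in> occ_heights c x \<union> occ_heights d x \<Longrightarrow> k = g x"
    by (rule balanced_flow_depth) blast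
  have "flow_height (c, d) \<le> ?H"
    using assms(1,3) by (auto simp: wiring_height_def wiring_def intro: Max_ge)
  moreover have "syms c \<subseteq> ?S" "syms d \<subseteq> ?S"
    using assms(3) by (auto simp: wiring_syms_def)
  ultimately have "truncate ?S ?H (subst \<sigma> t) = subst (\<lambda>x. truncate ?S (?H - g x) (\<sigma> x)) t"
    if "t = c \<or> t = d" for t
    using that fl g by (intro truncate_subst[where off = 0]) (auto simp: is_flow_def flow_height_def)
  moreover have "vars (truncate ?S (?H - g x) (\<sigma> x)) = {}" for x
    using truncate_bounded by blast
  ultimately have "trunc (subst \<sigma> c) \<in> fprod (c, d) (trunc (subst \<sigma> d))"
    using fprod_fact[OF fl] by (simp add: trunc_def)
  then show ?thesis
    using assms(3) in_Comp by (auto simp: comp_graph_def wprod_def)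
qed

lemma finite_syms: "finite (syms t)"
  by (induction t) auto

lemma finite_closed_terms:
  assumes "finite S"
  shows "finite {t. vars t = {} \<and> wf_trm t \<and> height t \<le> D \<and> syms t \<subseteq> S}"
proof (induction D)
  case 0
  have "{t. vars t = {} \<and> wf_trm t \<and> height t \<le> 0 \<and> syms t \<subseteq> S} \<subseteq> (\<lambda>f. Fun f []) ` S"
  proof
    fix t assume t: "t \<in> {t. vars t = {} \<and> wf_trm t \<and> height t \<le> 0 \<and> syms t \<subseteq> S}"
    then obtain f ts where "t = Fun f ts"
      by (cases t) auto
    with t show "t \<in> (\<lambda>f. Fun f []) ` S"
      by (auto split: if_splits)
  qed
  then show ?case
    using assms finite_subset by blast
next
  case (Suc D)
  let ?T = "{t. vars t = {} \<and> wf_trm t \<and> height t \<le> D \<and> syms t \<subseteq> S}"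
  have "{t. vars t = {} \<and> wf_trm t \<and> height t \<le> Suc D \<and> syms t \<subseteq> S} \<subseteq>
        (\<Union>f\<in>S. Fun f ` {ts. set ts \<subseteq> ?T \<and> length ts = arity f})"
  proof
    fix t assume t: "t \<in> {t. vars t = {} \<and> wf_trm t \<and> height t \<le> Suc D \<and> syms t \<subseteq> S}"
    then obtain f ts where ft: "t = Fun f ts"
      by (cases t) auto
    with t have "set ts \<subseteq> ?T"
      using height_Fun_le[of f ts D] by auto
    with t ft show "t \<in> (\<Union>f\<in>S. Fun f ` {ts. set ts \<subseteq> ?T \<and> length ts = arity f})"
      by auto
  qed
  moreover have "finite (\<Union>f\<in>S. Fun f ` {ts. set ts \<subseteq> ?T \<and> length ts = arity f})"
    using assms Suc.IH by (intro finite_UN_I finite_imageI finite_lists_length_eq) auto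
  ultimately show ?case
    using finite_subset by blast
qed

lemma finite_Comp:
  assumes "wiring F"
  shows "finite (Comp F)"
proof -
  have "finite (insert Star (wiring_syms F))"
    using assms by (auto simp: wiring_def wiring_syms_def finite_syms)
  moreover have "Comp F = (\<lambda>t. (t, star)) ` {t. vars t = {} \<and> wf_trm t \<and>
      height t \<le> wiring_height F \<and> syms t \<subseteq> insert Star (wiring_syms F)}"
    unfolding Comp_def by auto
  ultimately show ?thesis
    using finite_closed_terms by simp
qed

text \<open>Pigeonhole for walks: a walk with more vertices than a finite set
  containing all of them revisits a vertex, so the relation has a cycle.\<close>
lemma long_walk_imp_cyclic:
  assumes walk: "\<forall>i<n. (u i, u (Suc i)) \<in> r" and "finite V" "u ` {0..n} \<subseteq> V" "card V \<le> n"
  shows "\<not> acyclic r"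
proof -
  have "\<not> inj_on u {0..n}"
    using card_mono[OF assms(2,3)] assms(4) card_image by force
  then obtain i j where ij: "i < j" "j \<le> n" "u i = u j"
    by (auto simp: inj_on_def) (metis linorder_neqE_nat)
  have "(u i, u k) \<in> r\<^sup>+" if "i < k" "k \<le> n" for k
    using that
  proof (induction k)
    case (Suc k)
    then show ?case
      using walk by (cases "i = k") (auto intro: trancl_into_trancl)
  qed simp
  with ij show ?thesis
    unfolding acyclic_def by auto
qed

lemma acyclic_imp_nilpotent:
  assumes "wiring F" "balanced F" "acyclic (comp_graph F)"
  shows "nilpotent F"
proof (rule ccontr)
  assume "\<not> nilpotent F"
  then obtain a b where "(a, b) \<in> wpow F (card (Comp F))"
    unfolding nilpotent_def by (metis ex_in_conv surj_pair)
  then obtain t where t: "\<forall>i<card (Comp F). \<exists>c d \<sigma>. (c, d) \<in> F \<and> t (Suc i) = subst \<sigma> c \<and>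
      t i = subst \<sigma> d"
    using wpow_imp_chain by blast
  define U where "U = (\<lambda>i. (truncate (insert Star (wiring_syms F)) (wiring_height F) (t i), star))"
  have "(U i, U (Suc i)) \<in> comp_graph F" if "i < card (Comp F)" for i
  proof -
    from t that obtain c d \<sigma> where "(c, d) \<in> F" "t (Suc i) = subst \<sigma> c" "t i = subst \<sigma> d"
      by blast
    then show ?thesis
      using truncated_instance_edge[OF assms(1,2), of c d \<sigma>] by (simp add: U_def)
  qed
  moreover have "U i \<in> Comp F" for i
    using truncate_bounded[of "insert Star (wiring_syms F)" "wiring_height F" "t i"]
    by (auto simp: U_def Comp_def)
  ultimately have "\<not> acyclic (comp_graph F)"
    using long_walk_imp_cyclic[of "card (Comp F)" U _ "Comp F"] finite_Comp[OF assms(1)]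
    by blast
  with assms(3) show False
    by contradiction
qed

theorem mainTheorem7:
  assumes "wiring F" and "balanced F"
  shows "nilpotent F \<longleftrightarrow> acyclic (comp_graph F)"
  using nilpotent_imp_acyclic acyclic_imp_nilpotent[OF assms] by blast

end
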